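(* Suppose $y/x=q^{-r}$ or $v/u=q^{-r}$ for some nonnegative integer $r$, and $\max\{|xbtq^{-r}|,|autq^{-r}|\}<1$. Then \[ \sum_{n=0}^\infty(-1)^nq^{-\binom n2}U_n(x,y,a;q)U_n(u,v,b;q)\frac{t^n}{(q;q)_n}=\frac{(abt,ybt,avt;q)_\infty}{(xbt,aut;q)_\infty}\,{}_3\phi_2\left(\begin{array}{c}y/x,\ v/u,\ q/abt\\ q/xbt,\ q/aut\end{array};q,q\right). \]
   Context: $q$ is a fixed complex number with $0<|q|<1$. $(a;q)_\infty=\prod_{k\ge0}(1-aq^k)$, $(a;q)_n=(a;q)_\infty/(aq^n;q)_\infty$, $(a_1,\dots,a_m;q)_n=\prod_i(a_i;q)_n$. ${}_r\phi_s\left(\begin{array}{c}a_1,\dots,a_r\\ b_1,\dots,b_s\end{array};q,x\right)=\sum_{n\ge0}\frac{(a_1,\dots,a_r;q)_n}{(q,b_1,\dots,b_s;q)_n}\big[(-1)^nq^{\binom n2}\big]^{1+s-r}x^n$. ${n\brack k}=\frac{(q;q)_n}{(q;q)_k(q;q)_{n-k}}$, $P_n(x,y)=\prod_{i=0}^{n-1}(x-q^iy)$, and the Al-Salam–Carlitz polynomials are $U_n(x,y,a;q)=\sum_{k=0}^n{n\brack k}(-1)^kq^{\binom k2}a^kP_{n-k}(x,y)$. *)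

theory Defs
  imports "HOL-Analysis.Analysis"
begin

definition qpoch_inf :: "complex \<Rightarrow> complex \<Rightarrow> complex" where
  "qpoch_inf a q = (\<Prod>k. (1 - a * q ^ k))"

definition qpoch :: "complex \<Rightarrow> complex \<Rightarrow> nat \<Rightarrow> complex" where
  "qpoch a q n = (\<Prod>k<n. (1 - a * q ^ k))"

definition qpochs :: "complex list \<Rightarrow> complex \<Rightarrow> nat \<Rightarrow> complex" where
  "qpochs as q n = (\<Prod>a\<leftarrow>as. qpoch a q n)"

definition qphi :: "complex list \<Rightarrow> complex list \<Rightarrow> complex \<Rightarrow> complex \<Rightarrow> complex" where
  "qphi as bs q z = (\<Sum>n. qpochs as q n / qpochs (q # bs) q n
      * ((-1) ^ n * q ^ (n choose 2)) powi (1 + int (length bs) - int (length as)) * z ^ n)"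

definition qbinom :: "complex \<Rightarrow> nat \<Rightarrow> nat \<Rightarrow> complex" where
  "qbinom q n k = qpoch q q n / (qpoch q q k * qpoch q q (n - k))"

definition Pq :: "complex \<Rightarrow> nat \<Rightarrow> complex \<Rightarrow> complex \<Rightarrow> complex" where
  "Pq q n x y = (\<Prod>i<n. (x - q ^ i * y))"

definition ASC_U :: "nat \<Rightarrow> complex \<Rightarrow> complex \<Rightarrow> complex \<Rightarrow> complex \<Rightarrow> complex" where
  "ASC_U n x y a q = (\<Sum>k\<le>n. qbinom q n k * (-1) ^ k * q ^ (k choose 2) * a ^ k * Pq q (n - k) x y)"

end

theory Submission
  imports Defs
begin

text \<open>
  By symmetry we may assume \<open>y / x = q\<^sup>-\<^sup>r\<close>. Then \<open>P\<^sub>j(x, y) = 0\<close> for \<open>j > r\<close>, so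
  \<open>U\<^sub>n(x, y, a)\<close> has at most \<open>r + 1\<close> nonzero terms, and the series splits into \<open>r + 1\<close> series
  in \<open>U\<^sub>n(u, v, b)\<close> alone. Each of them is a shifted generating function
  \<open>\<Sum>\<^sub>m U\<^sub>j\<^sub>+\<^sub>m(u, v, b) z\<^sup>m / (q; q)\<^sub>m = D\<^sub>q\<^sup>j [(b z, v z; q)\<^sub>\<infinity> / (u z; q)\<^sub>\<infinity>]\<close>,
  which the \<open>q\<close>-Leibniz rule evaluates as a finite sum of infinite products. On the other side the
  \<open>\<^sub>3\<phi>\<^sub>2\<close> terminates at \<open>n = r\<close>, and expanding \<open>(x b t q\<^sup>-\<^sup>r; q)\<^sub>r\<^sub>-\<^sub>n\<close> by Rothe's identity turns the
  right-hand side into the same finite double sum, reindexed along diagonals.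
\<close>

lemma choose_two_Suc: "Suc n choose 2 = (n choose 2) + n"
  by (cases n) (auto simp: choose_two)

lemma choose_two_add: "(m + n) choose 2 = (m choose 2) + (n choose 2) + m * n"
  by (induction m) (simp_all add: choose_two_Suc)

lemma norm_power_mult_le:
  fixes q w :: complex
  assumes "norm q < 1"
  shows "norm (q ^ k * w) \<le> norm w"
  using assms by (simp add: norm_mult norm_power mult_left_le_one_le power_le_one)

lemma norm_mult_inverse_power_mono:
  fixes q c :: complex
  assumes "norm q < 1" "q \<noteq> 0" "n \<le> r"
  shows "norm (c * inverse (q ^ n)) \<le> norm (c * inverse (q ^ r))"
proof -
  have "q ^ r = q ^ (r - n) * q ^ n"
    using assms(3) by (simp add: power_add[symmetric])
  hence "c * inverse (q ^ n) = q ^ (r - n) * (c * inverse (q ^ r))"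
    using assms(2) by (simp add: field_simps)
  thus ?thesis by (metis norm_power_mult_le[OF assms(1)])
qed

subsection \<open>Finite and infinite \<open>q\<close>-Pochhammer symbols\<close>

lemma qpoch_0 [simp]: "qpoch w q 0 = 1"
  by (simp add: qpoch_def)

lemma qpoch_Suc: "qpoch w q (Suc n) = qpoch w q n * (1 - w * q ^ n)"
  by (simp add: qpoch_def)

lemma qpoch_Suc_left: "qpoch w q (Suc n) = (1 - w) * qpoch (w * q) q n"
  unfolding qpoch_def by (subst prod.lessThan_Suc_shift) (simp add: mult_ac)

lemma qpoch_add: "qpoch w q (n + k) = qpoch w q n * qpoch (w * q ^ n) q k"
  by (induction k) (simp_all add: qpoch_def power_add mult_ac)

lemma qpoch_q_nonzero:
  fixes q :: complex
  assumes "norm q < 1"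
  shows "qpoch q q n \<noteq> 0"
proof -
  have "q * q ^ k \<noteq> 1" for k
  proof
    assume "q * q ^ k = 1"
    hence "norm q ^ Suc k = 1" by (metis norm_one norm_power power_Suc)
    moreover have "norm q ^ Suc k < 1"
      using assms by (subst power_less_one_iff) auto
    ultimately show False by simp
  qed
  thus ?thesis by (simp add: qpoch_def)
qed

lemma qpoch_inverse_power_eq_0:
  fixes q :: complex
  assumes "q \<noteq> 0" "r < n"
  shows "qpoch (inverse (q ^ r)) q n = 0"
  unfolding qpoch_def using assms by (intro prod_zero) (auto intro!: bexI[of _ r])

lemma qpoch_inverse_power:
  fixes q :: complex
  assumes q: "norm q < 1" "q \<noteq> 0" and "k \<le> s"
  shows "qpoch (inverse (q ^ s)) q k
     = (-1) ^ k * q ^ (k choose 2) * inverse (q ^ s) ^ k * qpoch q q s / qpoch q q (s - k)"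
  using \<open>k \<le> s\<close>
proof (induction k)
  case 0 then show ?case using qpoch_q_nonzero[OF q(1), of s] by (simp add: choose_two)
next
  case (Suc k)
  obtain m where s: "s = Suc k + m" using Suc.prems le_Suc_ex by blast
  have sk: "s - k = Suc m" "s - Suc k = m" using s by auto
  have nz: "qpoch q q m \<noteq> 0" "1 - q * q ^ m \<noteq> 0"
    using qpoch_q_nonzero[OF q(1), of m] qpoch_q_nonzero[OF q(1), of "Suc m"]
    by (auto simp: qpoch_Suc)
  have qs: "q ^ s = q ^ k * q * q ^ m" using s by (simp add: power_add mult_ac)
  have "qpoch (inverse (q ^ s)) q (Suc k)
      = (-1) ^ k * q ^ (k choose 2) * inverse (q ^ s) ^ k * qpoch q q s / (qpoch q q m * (1 - q * q ^ m))
        * (1 - inverse (q ^ s) * q ^ k)"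
    using Suc by (simp add: sk qpoch_Suc)
  also have "\<dots> = (-1) ^ Suc k * q ^ (Suc k choose 2) * inverse (q ^ s) ^ Suc k * qpoch q q s / qpoch q q m"
    using nz q(2) unfolding qs choose_two_Suc by (simp add: field_simps power_add)
  finally show ?case by (simp add: sk)
qed

lemma qpoch_reflect:
  fixes q c :: complex
  assumes "q \<noteq> 0" "c \<noteq> 0"
  shows "qpoch (c * inverse (q ^ n)) q n = (-c) ^ n * inverse (q ^ (Suc n choose 2)) * qpoch (q / c) q n"
proof (induction n)
  case (Suc n)
  have "c * inverse (q ^ Suc n) * q = c * inverse (q ^ n)" using assms by simp
  hence "qpoch (c * inverse (q ^ Suc n)) q (Suc n) = (1 - c * inverse (q ^ Suc n)) * qpoch (c * inverse (q ^ n)) q n"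
    by (simp only: qpoch_Suc_left)
  also have "\<dots> = (-c) ^ Suc n * inverse (q ^ (Suc (Suc n) choose 2)) * qpoch (q / c) q (Suc n)"
    unfolding Suc.IH qpoch_Suc using assms by (simp add: choose_two_Suc power_add field_simps)
  finally show ?case .
qed (simp add: choose_two)

lemma Pq_Suc: "Pq q (Suc n) x y = Pq q n x y * (x - q ^ n * y)"
  by (simp add: Pq_def)

lemma Pq_eq_qpoch: "x \<noteq> 0 \<Longrightarrow> Pq q n x y = x ^ n * qpoch (y / x) q n"
  by (induction n) (simp_all add: Pq_def qpoch_def field_simps)

lemma qpoch_inf_0_left [simp]: "qpoch_inf 0 q = 1"
  by (simp add: qpoch_inf_def)

lemma qpoch_inf_convergent_prod:
  fixes w q :: complex
  assumes "norm q < 1"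
  shows "convergent_prod (\<lambda>k. 1 - w * q ^ k)"
proof -
  have "summable (\<lambda>k. norm w * norm q ^ k)"
    using assms by (intro summable_mult summable_geometric) auto
  hence "summable (\<lambda>k. norm ((1 - w * q ^ k) - 1))"
    by (simp add: norm_mult norm_power)
  thus ?thesis
    by (intro abs_convergent_prod_imp_convergent_prod summable_imp_abs_convergent_prod)
qed

lemma qpoch_tendsto_qpoch_inf:
  assumes "norm q < 1"
  shows "(\<lambda>n. qpoch w q n) \<longlonglongrightarrow> qpoch_inf w q"
proof -
  have "(\<lambda>n. \<Prod>i\<le>n. 1 - w * q ^ i) \<longlonglongrightarrow> qpoch_inf w q"
    unfolding qpoch_inf_def by (rule convergent_prod_LIMSEQ[OF qpoch_inf_convergent_prod[OF assms]])
  hence "(\<lambda>n. qpoch w q (Suc n)) \<longlonglongrightarrow> qpoch_inf w q"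
    by (simp add: qpoch_def lessThan_Suc_atMost)
  thus ?thesis by (rule LIMSEQ_imp_Suc)
qed

lemma qpoch_inf_split:
  assumes "norm q < 1"
  shows "qpoch_inf w q = qpoch w q n * qpoch_inf (w * q ^ n) q"
proof -
  have "(\<lambda>k. qpoch w q (k + n)) \<longlonglongrightarrow> qpoch_inf w q"
    using qpoch_tendsto_qpoch_inf[OF assms] by (rule LIMSEQ_ignore_initial_segment)
  moreover have "(\<lambda>k. qpoch w q (k + n)) \<longlonglongrightarrow> qpoch w q n * qpoch_inf (w * q ^ n) q"
    unfolding add.commute[of _ n] qpoch_add
    by (intro tendsto_mult tendsto_const qpoch_tendsto_qpoch_inf assms)
  ultimately show ?thesis by (rule LIMSEQ_unique)
qed

lemma qpoch_inf_rec:
  assumes "norm q < 1"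
  shows "qpoch_inf w q = (1 - w) * qpoch_inf (w * q) q"
  using qpoch_inf_split[OF assms, of w 1] by (simp add: qpoch_def)

lemma qpoch_inf_nonzero:
  assumes "norm q < 1" "\<And>k. w * q ^ k \<noteq> 1"
  shows "qpoch_inf w q \<noteq> 0"
  unfolding qpoch_inf_def
  by (rule prodinf_nonzero[OF qpoch_inf_convergent_prod[OF assms(1)]]) (use assms(2) in auto)

lemma qpoch_inf_nonzero_norm_less:
  assumes "norm q < 1" "norm w < 1"
  shows "qpoch_inf w q \<noteq> 0"
proof (rule qpoch_inf_nonzero[OF assms(1)])
  fix k
  have "norm (w * q ^ k) < 1"
    using norm_power_mult_le[OF assms(1), of k w] assms(2) by (simp add: mult.commute)
  thus "w * q ^ k \<noteq> 1" by auto
qed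

lemma qpoch_mult_qpoch_inf_reflect:
  fixes q c :: complex
  assumes "norm q < 1" "q \<noteq> 0" "c \<noteq> 0"
  shows "qpoch (q / c) q n * qpoch_inf c q
       = qpoch_inf (c * inverse (q ^ n)) q / ((-c) ^ n * inverse (q ^ (Suc n choose 2)))"
proof -
  have "c * inverse (q ^ n) * q ^ n = c" using assms(2) by simp
  hence "qpoch_inf (c * inverse (q ^ n)) q
       = (-c) ^ n * inverse (q ^ (Suc n choose 2)) * qpoch (q / c) q n * qpoch_inf c q"
    using qpoch_inf_split[OF assms(1), of "c * inverse (q ^ n)" n] by (simp only: qpoch_reflect[OF assms(2,3)])
  thus ?thesis using assms(2,3) by (simp add: field_simps)
qed

subsection \<open>Gaussian binomial coefficients\<close>

lemma qbinom_n_0 [simp]: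
  fixes q :: complex
  assumes "norm q < 1"
  shows "qbinom q n 0 = 1"
  using qpoch_q_nonzero[OF assms, of n] by (simp add: qbinom_def)

lemma qbinom_n_n [simp]:
  fixes q :: complex
  assumes "norm q < 1"
  shows "qbinom q n n = 1"
  using qpoch_q_nonzero[OF assms, of n] by (simp add: qbinom_def)

lemma qbinom_divide_qpoch:
  fixes q :: complex
  assumes "norm q < 1" "k \<le> n"
  shows "qbinom q n k / qpoch q q n = 1 / (qpoch q q k * qpoch q q (n - k))"
  using qpoch_q_nonzero[OF assms(1), of n] by (simp add: qbinom_def field_simps)

lemma qbinom_Suc_Suc:
  fixes q :: complex
  assumes q: "norm q < 1"
  shows "qbinom q (Suc (Suc (i + m))) (Suc i)
       = q ^ Suc i * qbinom q (Suc (i + m)) (Suc i) + qbinom q (Suc (i + m)) i"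
proof -
  define A B C P Q where "A = qpoch q q (i + m) * (1 - q * q ^ (i + m))" and "B = qpoch q q i"
    and "C = qpoch q q m" and "P = 1 - q * q ^ i" and "Q = 1 - q * q ^ m"
  have "B \<noteq> 0" "C \<noteq> 0" "P \<noteq> 0" "Q \<noteq> 0"
    using qpoch_q_nonzero[OF q, of i] qpoch_q_nonzero[OF q, of m]
      qpoch_q_nonzero[OF q, of "Suc i"] qpoch_q_nonzero[OF q, of "Suc m"]
    by (auto simp: B_def C_def P_def Q_def qpoch_Suc)
  moreover have "qbinom q (Suc (Suc (i + m))) (Suc i) = A * (1 - (1 - P) * (1 - Q)) / (B * P * (C * Q))"
    by (simp add: qbinom_def qpoch_Suc A_def B_def C_def P_def Q_def power_add mult_ac)
  moreover have "qbinom q (Suc (i + m)) (Suc i) = A / (B * P * C)"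
    by (simp add: qbinom_def qpoch_Suc A_def B_def C_def P_def)
  moreover have "qbinom q (Suc (i + m)) i = A / (B * (C * Q))"
    by (simp add: qbinom_def qpoch_Suc A_def B_def C_def Q_def)
  moreover have "q ^ Suc i = 1 - P" by (simp add: P_def)
  ultimately show ?thesis
    by (simp only:) (simp add: field_simps)
qed

lemma qbinom_Suc:
  fixes q :: complex
  assumes q: "norm q < 1" and k: "k \<le> Suc n"
  shows "qbinom q (Suc n) k
       = (if k \<le> n then q ^ k * qbinom q n k else 0) + (if 1 \<le> k then qbinom q n (k - 1) else 0)"
proof (cases k)
  case (Suc i)
  show ?thesis
  proof (cases "k = Suc n")
    case False
    with k Suc obtain m where "n = Suc (i + m)"
      by (metis Suc_le_D add_Suc_right le_Suc_ex le_SucE Suc_le_mono)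
    then show ?thesis using qbinom_Suc_Suc[OF q, of i m] Suc by simp
  qed (use Suc q in simp)
qed (use q in simp)

lemma qpoch_rothe:
  fixes q w :: complex
  assumes q: "norm q < 1"
  shows "qpoch w q n = (\<Sum>k\<le>n. qbinom q n k * (-1) ^ k * q ^ (k choose 2) * w ^ k)"
proof (induction n arbitrary: w)
  case 0 then show ?case using q by (simp add: choose_two)
next
  case (Suc n)
  define T where "T k = (-1) ^ k * q ^ (k choose 2) * w ^ k" for k
  have "(\<Sum>k\<le>Suc n. qbinom q (Suc n) k * (-1) ^ k * q ^ (k choose 2) * w ^ k)
      = (\<Sum>k\<le>Suc n. (if k \<le> n then q ^ k * qbinom q n k else 0) * T k)
      + (\<Sum>k\<le>Suc n. (if 1 \<le> k then qbinom q n (k - 1) else 0) * T k)"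
    by (simp add: qbinom_Suc[OF q] T_def sum.distrib[symmetric] algebra_simps)
  also have "(\<Sum>k\<le>Suc n. (if k \<le> n then q ^ k * qbinom q n k else 0) * T k) = qpoch (w * q) q n"
    unfolding Suc.IH[of "w * q"] T_def by (simp add: atMost_Suc power_mult_distrib mult_ac)
  also have "(\<Sum>k\<le>Suc n. (if 1 \<le> k then qbinom q n (k - 1) else 0) * T k) = (\<Sum>k\<le>n. qbinom q n k * T (Suc k))"
    by (subst sum.atMost_Suc_shift) simp
  also have "\<dots> = - w * qpoch (w * q) q n"
    unfolding Suc.IH[of "w * q"] T_def sum_distrib_left
    by (intro sum.cong refl) (simp add: choose_two_Suc power_add power_mult_distrib)
  finally show ?case by (simp add: qpoch_Suc_left algebra_simps)
qed

subsection \<open>Power series defined by a first-order \<open>q\<close>-recurrence\<close>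

lemma summable_norm_ratio_limit:
  fixes f r :: "nat \<Rightarrow> complex"
  assumes lim: "(\<lambda>n. norm (r n)) \<longlonglongrightarrow> L" and "L < 1"
    and rec: "\<And>n. f (Suc n) = f n * r n"
  shows "summable (\<lambda>n. norm (f n))"
proof -
  define c where "c = (1 + L) / 2"
  have "L < c" "c < 1" using \<open>L < 1\<close> by (auto simp: c_def)
  from order_tendstoD(2)[OF lim \<open>L < c\<close>] obtain N where N: "\<And>n. n \<ge> N \<Longrightarrow> norm (r n) < c"
    by (auto simp: eventually_sequentially)
  show ?thesis
  proof (rule summable_ratio_test[OF \<open>c < 1\<close>, of N])
    fix n assume "n \<ge> N"
    have "norm (norm (f (Suc n))) = norm (f n) * norm (r n)" by (simp add: rec norm_mult)
    also have "\<dots> \<le> norm (f n) * c" using N[OF \<open>n \<ge> N\<close>] by (intro mult_left_mono) auto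
    finally show "norm (norm (f (Suc n))) \<le> c * norm (norm (f n))" by (simp add: mult_ac)
  qed
qed

lemma summable_norm_qrecurrence_powser:
  fixes c :: "nat \<Rightarrow> complex" and q z \<alpha> \<gamma> :: complex
  assumes q: "norm q < 1"
    and rec: "\<And>n. c (Suc n) * (1 - q ^ Suc n) = c n * (\<gamma> - \<alpha> * q ^ n)"
    and z: "norm (\<gamma> * z) < 1"
  shows "summable (\<lambda>n. norm (c n * z ^ n))"
proof (rule summable_norm_ratio_limit)
  fix n
  have "1 - q ^ Suc n \<noteq> 0"
    using qpoch_q_nonzero[OF q, of "Suc n"] by (auto simp: qpoch_Suc)
  hence "c (Suc n) = c n * ((\<gamma> - \<alpha> * q ^ n) / (1 - q ^ Suc n))"
    using rec[of n] by (simp add: field_simps)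
  thus "c (Suc n) * z ^ Suc n = c n * z ^ n * ((\<gamma> - \<alpha> * q ^ n) / (1 - q ^ Suc n) * z)"
    by (simp add: mult_ac)
next
  have "(\<lambda>n. q ^ n) \<longlonglongrightarrow> 0" by (rule LIMSEQ_power_zero) (use q in simp)
  thus "(\<lambda>n. norm ((\<gamma> - \<alpha> * q ^ n) / (1 - q ^ Suc n) * z)) \<longlonglongrightarrow> norm ((\<gamma> - \<alpha> * 0) / (1 - q * 0) * z)"
    using q by (auto intro!: tendsto_eq_intros)
qed (use z in \<open>simp add: norm_mult\<close>)

lemma qrecurrence_powser_step:
  fixes c :: "nat \<Rightarrow> complex" and q w \<alpha> \<gamma> :: complex
  assumes rec: "\<And>n. c (Suc n) * (1 - q ^ Suc n) = c n * (\<gamma> - \<alpha> * q ^ n)"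
    and sw: "summable (\<lambda>n. c n * w ^ n)" and sqw: "summable (\<lambda>n. c n * (q * w) ^ n)"
  shows "(1 - \<gamma> * w) * (\<Sum>n. c n * w ^ n) = (1 - \<alpha> * w) * (\<Sum>n. c n * (q * w) ^ n)"
proof -
  define f where "f w = (\<Sum>n. c n * w ^ n)" for w
  have shifted: "c (Suc n) * w ^ Suc n - c (Suc n) * (q * w) ^ Suc n
      = \<gamma> * w * (c n * w ^ n) - \<alpha> * w * (c n * (q * w) ^ n)" for n
  proof -
    have "c (Suc n) * w ^ Suc n - c (Suc n) * (q * w) ^ Suc n = (c (Suc n) * (1 - q ^ Suc n)) * w ^ Suc n"
      by (simp add: power_mult_distrib algebra_simps)
    thus ?thesis unfolding rec by (simp add: power_mult_distrib algebra_simps)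
  qed
  have "(\<lambda>n. \<gamma> * w * (c n * w ^ n) - \<alpha> * w * (c n * (q * w) ^ n)) sums (\<gamma> * w * f w - \<alpha> * w * f (q * w))"
    unfolding f_def by (intro sums_diff sums_mult summable_sums sw sqw)
  hence "(\<lambda>n. c (Suc n) * w ^ Suc n - c (Suc n) * (q * w) ^ Suc n) sums (\<gamma> * w * f w - \<alpha> * w * f (q * w))"
    by (simp only: shifted)
  hence "(\<lambda>n. c n * w ^ n - c n * (q * w) ^ n) sums
      (\<gamma> * w * f w - \<alpha> * w * f (q * w) + (c 0 * w ^ 0 - c 0 * (q * w) ^ 0))"
    by (subst sums_Suc_iff[symmetric]) simp
  moreover have "(\<lambda>n. c n * w ^ n - c n * (q * w) ^ n) sums (f w - f (q * w))"
    unfolding f_def by (intro sums_diff summable_sums sw sqw)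
  ultimately have "f w - f (q * w) = \<gamma> * w * f w - \<alpha> * w * f (q * w)"
    using sums_unique2 by fastforce
  thus ?thesis unfolding f_def by (simp add: algebra_simps)
qed

text \<open>Iterating the functional equation \<open>(1 - \<gamma> w) f(w) = (1 - \<alpha> w) f(q w)\<close> along \<open>w = q\<^sup>N z\<close>
  and letting \<open>N \<rightarrow> \<infinity>\<close> identifies the sum as a quotient of infinite products.\<close>

lemma qrecurrence_powser_iterate:
  fixes c :: "nat \<Rightarrow> complex" and q z \<alpha> \<gamma> :: complex
  assumes rec: "\<And>n. c (Suc n) * (1 - q ^ Suc n) = c n * (\<gamma> - \<alpha> * q ^ n)"
    and summ: "\<And>k. summable (\<lambda>n. c n * (q ^ k * z) ^ n)"
  shows "qpoch (\<gamma> * z) q N * (\<Sum>n. c n * z ^ n) = qpoch (\<alpha> * z) q N * (\<Sum>n. c n * (q ^ N * z) ^ n)"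
proof (induction N)
  case (Suc N)
  define f where "f w = (\<Sum>n. c n * w ^ n)" for w
  have step: "(1 - \<gamma> * (q ^ N * z)) * f (q ^ N * z) = (1 - \<alpha> * (q ^ N * z)) * f (q ^ Suc N * z)"
    using qrecurrence_powser_step[OF rec summ[of N]] summ[of "Suc N"] by (simp add: f_def mult.assoc)
  have "qpoch (\<gamma> * z) q (Suc N) * f z = (1 - \<gamma> * (q ^ N * z)) * (qpoch (\<gamma> * z) q N * f z)"
    by (simp add: qpoch_Suc mult_ac)
  also have "\<dots> = qpoch (\<alpha> * z) q N * ((1 - \<gamma> * (q ^ N * z)) * f (q ^ N * z))"
    using Suc.IH unfolding f_def by (simp only:) (simp only: mult_ac)
  also have "\<dots> = qpoch (\<alpha> * z) q (Suc N) * f (q ^ Suc N * z)"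
    by (simp only: step) (simp add: qpoch_Suc mult_ac)
  finally show ?case unfolding f_def .
qed simp

lemma qrecurrence_powser_sums:
  fixes c :: "nat \<Rightarrow> complex" and q z \<alpha> \<gamma> :: complex
  assumes q: "norm q < 1"
    and c0: "c 0 = 1"
    and rec: "\<And>n. c (Suc n) * (1 - q ^ Suc n) = c n * (\<gamma> - \<alpha> * q ^ n)"
    and z: "norm (\<gamma> * z) < 1"
  shows "(\<lambda>n. c n * z ^ n) sums (qpoch_inf (\<alpha> * z) q / qpoch_inf (\<gamma> * z) q)"
proof (cases "z = 0")
  case True
  then show ?thesis using powser_sums_zero[of c] c0 by simp
next
  case False
  define f where "f w = (\<Sum>n. c n * w ^ n)" for w
  have summ: "summable (\<lambda>n. c n * (q ^ k * z) ^ n)" for k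
  proof (rule summable_norm_cancel, rule summable_norm_qrecurrence_powser[OF q rec])
    show "norm (\<gamma> * (q ^ k * z)) < 1"
      using norm_power_mult_le[OF q, of k "\<gamma> * z"] z by (simp add: mult_ac)
  qed
  have "isCont f 0"
    unfolding f_def by (rule isCont_powser[OF summ[of 0]]) (use False in auto)
  moreover have "(\<lambda>N. q ^ N * z) \<longlonglongrightarrow> 0"
    using tendsto_mult_left_zero[OF LIMSEQ_power_zero[of q]] q by simp
  ultimately have "(\<lambda>N. f (q ^ N * z)) \<longlonglongrightarrow> f 0"
    using isCont_tendsto_compose by blast
  moreover have "f 0 = 1" unfolding f_def using c0 powser_zero[of c] by simp
  ultimately have "(\<lambda>N. qpoch (\<alpha> * z) q N * f (q ^ N * z)) \<longlonglongrightarrow> qpoch_inf (\<alpha> * z) q"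
    using tendsto_mult[OF qpoch_tendsto_qpoch_inf[OF q]] by fastforce
  moreover have "(\<lambda>N. qpoch (\<gamma> * z) q N * f z) \<longlonglongrightarrow> qpoch_inf (\<gamma> * z) q * f z"
    by (intro tendsto_mult qpoch_tendsto_qpoch_inf q tendsto_const)
  ultimately have "qpoch_inf (\<gamma> * z) q * f z = qpoch_inf (\<alpha> * z) q"
    using qrecurrence_powser_iterate[OF rec summ] LIMSEQ_unique unfolding f_def by fastforce
  moreover have "qpoch_inf (\<gamma> * z) q \<noteq> 0" by (rule qpoch_inf_nonzero_norm_less[OF q z])
  ultimately have "f z = qpoch_inf (\<alpha> * z) q / qpoch_inf (\<gamma> * z) q"
    by (simp add: field_simps)
  with summ[of 0] show ?thesis
    unfolding f_def by (metis mult_1 power_0 summable_sums)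
qed

lemma q_binomial_coeff_rec:
  fixes q :: complex
  assumes "norm q < 1"
  shows "qpoch \<alpha> q (Suc n) / qpoch q q (Suc n) * (1 - q ^ Suc n) = qpoch \<alpha> q n / qpoch q q n * (1 - \<alpha> * q ^ n)"
  using qpoch_q_nonzero[OF assms, of "Suc n"] by (simp add: qpoch_Suc field_simps)

lemma euler_coeff_rec:
  fixes q :: complex
  assumes "norm q < 1"
  shows "(-1) ^ Suc n * q ^ (Suc n choose 2) / qpoch q q (Suc n) * (1 - q ^ Suc n)
       = (-1) ^ n * q ^ (n choose 2) / qpoch q q n * (0 - 1 * q ^ n)"
  using qpoch_q_nonzero[OF assms, of "Suc n"] by (simp add: qpoch_Suc choose_two_Suc power_add field_simps)

lemma q_binomial_theorem:
  fixes q z \<alpha> :: complex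
  assumes "norm q < 1" "norm z < 1"
  shows "(\<lambda>n. qpoch \<alpha> q n / qpoch q q n * z ^ n) sums (qpoch_inf (\<alpha> * z) q / qpoch_inf z q)"
  using qrecurrence_powser_sums[where c="\<lambda>n. qpoch \<alpha> q n / qpoch q q n" and z=z,
      OF assms(1) _ q_binomial_coeff_rec[OF assms(1)]] assms(2)
  by simp

lemma summable_norm_q_binomial:
  fixes q z \<alpha> :: complex
  assumes "norm q < 1" "norm z < 1"
  shows "summable (\<lambda>n. norm (qpoch \<alpha> q n / qpoch q q n * z ^ n))"
  using summable_norm_qrecurrence_powser[where c="\<lambda>n. qpoch \<alpha> q n / qpoch q q n" and z=z,
      OF assms(1) q_binomial_coeff_rec[OF assms(1)]] assms(2)
  by simp

lemma euler_qpoch_inf: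
  fixes q z :: complex
  assumes "norm q < 1"
  shows "(\<lambda>n. (-1) ^ n * q ^ (n choose 2) / qpoch q q n * z ^ n) sums qpoch_inf z q"
  using qrecurrence_powser_sums[where c="\<lambda>n. (-1) ^ n * q ^ (n choose 2) / qpoch q q n" and z=z,
      OF assms _ euler_coeff_rec[OF assms]]
  by (simp add: choose_two)

lemma summable_norm_euler:
  fixes q z :: complex
  assumes "norm q < 1"
  shows "summable (\<lambda>n. norm ((-1) ^ n * q ^ (n choose 2) / qpoch q q n * z ^ n))"
  using summable_norm_qrecurrence_powser[where c="\<lambda>n. (-1) ^ n * q ^ (n choose 2) / qpoch q q n" and z=z,
      OF assms euler_coeff_rec[OF assms]]
  by simp

subsection \<open>The \<open>q\<close>-difference operator\<close>

definition Dq :: "complex \<Rightarrow> (complex \<Rightarrow> complex) \<Rightarrow> complex \<Rightarrow> complex" where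
  "Dq q f z = (f z - f (q * z)) / z"

lemma Dq_funpow_Suc: "(Dq q ^^ Suc j) f z = ((Dq q ^^ j) f z - (Dq q ^^ j) f (q * z)) / z"
  by (simp add: Dq_def)

lemma Dq_funpow_mult:
  fixes q :: complex and f g :: "complex \<Rightarrow> complex"
  assumes q: "norm q < 1" "q \<noteq> 0" and "z \<noteq> 0"
  shows "(Dq q ^^ n) (\<lambda>w. f w * g w) z
       = (\<Sum>k\<le>n. qbinom q n k * ((Dq q ^^ k) f z * (Dq q ^^ (n - k)) g (q ^ k * z)))"
  using \<open>z \<noteq> 0\<close>
proof (induction n arbitrary: z)
  case 0 then show ?case using q by simp
next
  case (Suc n)
  define F G where "F k = (Dq q ^^ k) f" and "G k = (Dq q ^^ k) g" for k
  define T where "T k = F k z * G (Suc n - k) (q ^ k * z)" for k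
  have qz: "q * z \<noteq> 0" "q ^ k * z \<noteq> 0" for k using Suc.prems q by auto
  have step: "(F k z * G m (q ^ k * z) - F k (q * z) * G m (q ^ k * (q * z))) / z
      = q ^ k * (F k z * G (Suc m) (q ^ k * z)) + F (Suc k) z * G m (q ^ Suc k * z)" for k m
  proof -
    have "q ^ k * (q * z) = q * (q ^ k * z)" "q ^ Suc k * z = q * (q ^ k * z)" by (simp_all add: mult_ac)
    thus ?thesis using qz(2)[of k] Suc.prems q(2) by (simp add: F_def G_def Dq_def field_simps)
  qed
  have "(Dq q ^^ Suc n) (\<lambda>w. f w * g w) z
      = (\<Sum>k\<le>n. qbinom q n k * ((F k z * G (n - k) (q ^ k * z) - F k (q * z) * G (n - k) (q ^ k * (q * z))) / z))"
    unfolding Dq_funpow_Suc Suc.IH[OF Suc.prems] Suc.IH[OF qz(1)] F_def G_def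
    by (simp add: sum_divide_distrib sum_subtractf[symmetric] algebra_simps)
  also have "\<dots> = (\<Sum>k\<le>n. q ^ k * qbinom q n k * T k) + (\<Sum>k\<le>n. qbinom q n k * T (Suc k))"
    unfolding step T_def by (simp add: sum.distrib algebra_simps Suc_diff_le)
  also have "(\<Sum>k\<le>n. q ^ k * qbinom q n k * T k) = (\<Sum>k\<le>Suc n. (if k \<le> n then q ^ k * qbinom q n k else 0) * T k)"
    by (simp add: atMost_Suc)
  also have "(\<Sum>k\<le>n. qbinom q n k * T (Suc k)) = (\<Sum>k\<le>Suc n. (if 1 \<le> k then qbinom q n (k - 1) else 0) * T k)"
    by (subst sum.atMost_Suc_shift) simp
  also have "(\<Sum>k\<le>Suc n. (if k \<le> n then q ^ k * qbinom q n k else 0) * T k)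
      + (\<Sum>k\<le>Suc n. (if 1 \<le> k then qbinom q n (k - 1) else 0) * T k)
      = (\<Sum>k\<le>Suc n. qbinom q (Suc n) k * T k)"
    unfolding sum.distrib[symmetric] by (intro sum.cong refl) (simp add: qbinom_Suc[OF q(1)] algebra_simps)
  finally show ?case unfolding T_def F_def G_def .
qed

lemma Dq_funpow_qpoch_inf:
  fixes q b :: complex
  assumes q: "norm q < 1" "q \<noteq> 0" and "z \<noteq> 0"
  shows "(Dq q ^^ k) (\<lambda>w. qpoch_inf (b * w) q) z = (-b) ^ k * q ^ (k choose 2) * qpoch_inf (b * q ^ k * z) q"
  using \<open>z \<noteq> 0\<close>
proof (induction k arbitrary: z)
  case 0 then show ?case by (simp add: choose_two)
next
  case (Suc k)
  have qz: "q * z \<noteq> 0" using Suc q by simp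
  have rec: "qpoch_inf (b * q ^ k * z) q = (1 - b * q ^ k * z) * qpoch_inf (b * q ^ Suc k * z) q"
    using qpoch_inf_rec[OF q(1), of "b * q ^ k * z"] by (simp add: mult_ac)
  have "b * q ^ k * (q * z) = b * q ^ Suc k * z" by (simp add: mult_ac)
  then show ?case
    unfolding Dq_funpow_Suc Suc.IH[OF Suc.prems] Suc.IH[OF qz] rec using Suc.prems
    by (simp add: choose_two_Suc power_add field_simps)
qed

lemma Dq_funpow_qpoch_inf_ratio:
  fixes q u v :: complex
  assumes q: "norm q < 1" "q \<noteq> 0" and "z \<noteq> 0" and "\<forall>i. u * z * q ^ i \<noteq> 1"
  shows "(Dq q ^^ n) (\<lambda>w. qpoch_inf (v * w) q / qpoch_inf (u * w) q) z
       = Pq q n u v * qpoch_inf (v * q ^ n * z) q / qpoch_inf (u * z) q"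
  using assms(3,4)
proof (induction n arbitrary: z)
  case 0 then show ?case by (simp add: Pq_def)
next
  case (Suc n)
  define X Y where "X = qpoch_inf (v * q ^ Suc n * z) q" and "Y = qpoch_inf (u * (q * z)) q"
  have qz: "q * z \<noteq> 0" using Suc q by simp
  have qz_avoids: "\<forall>i. u * (q * z) * q ^ i \<noteq> 1"
    using Suc.prems(2) by (metis mult.assoc mult.left_commute power_Suc)
  have "Y \<noteq> 0" unfolding Y_def by (rule qpoch_inf_nonzero[OF q(1)]) (use qz_avoids in auto)
  moreover have "1 - u * z \<noteq> 0" using Suc.prems(2) by (metis mult.right_neutral power_0 right_minus_eq)
  moreover have rec_u: "qpoch_inf (u * z) q = (1 - u * z) * Y"
    unfolding Y_def using qpoch_inf_rec[OF q(1), of "u * z"] by (simp add: mult_ac)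
  moreover have rec_v: "qpoch_inf (v * q ^ n * z) q = (1 - v * q ^ n * z) * X"
    unfolding X_def using qpoch_inf_rec[OF q(1), of "v * q ^ n * z"] by (simp add: mult_ac)
  moreover have "qpoch_inf (v * q ^ n * (q * z)) q = X" unfolding X_def by (simp add: mult_ac)
  ultimately show ?case
    unfolding Dq_funpow_Suc Suc.IH[OF Suc.prems] Suc.IH[OF qz qz_avoids] Pq_Suc
      X_def[symmetric] Y_def[symmetric] rec_u rec_v
    using Suc.prems(1) by (simp add: field_simps)
qed

subsection \<open>Generating functions of the Al-Salam--Carlitz polynomials\<close>

text \<open>The coefficient sum defining \<open>U\<^sub>n\<close> is the Cauchy product of Euler's series for
  \<open>(b z; q)\<^sub>\<infinity>\<close> and the \<open>q\<close>-binomial series for \<open>(v z; q)\<^sub>\<infinity> / (u z; q)\<^sub>\<infinity>\<close>.\<close>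

lemma ASC_U_generating_function:
  fixes q u v b z :: complex
  assumes q: "norm q < 1" and u: "u \<noteq> 0" and uz: "norm (u * z) < 1"
  shows "(\<lambda>n. ASC_U n u v b q * z ^ n / qpoch q q n) sums
           (qpoch_inf (b * z) q * (qpoch_inf (v * z) q / qpoch_inf (u * z) q))"
proof -
  define A where "A n = (-1) ^ n * q ^ (n choose 2) / qpoch q q n * (b * z) ^ n" for n
  define B where "B n = qpoch (v / u) q n / qpoch q q n * (u * z) ^ n" for n
  have "(\<lambda>n. \<Sum>i\<le>n. A i * B (n - i)) sums ((\<Sum>n. A n) * (\<Sum>n. B n))"
    unfolding A_def B_def
    by (intro Cauchy_product_sums summable_norm_euler summable_norm_q_binomial q uz)
  moreover have "(\<Sum>n. A n) = qpoch_inf (b * z) q"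
    unfolding A_def by (rule sums_unique[symmetric], rule euler_qpoch_inf[OF q])
  moreover have "(\<Sum>n. B n) = qpoch_inf (v * z) q / qpoch_inf (u * z) q"
    using sums_unique[OF q_binomial_theorem[OF q uz, of "v / u"]] u by (simp add: B_def)
  moreover have "(\<Sum>i\<le>n. A i * B (n - i)) = ASC_U n u v b q * z ^ n / qpoch q q n" for n
    unfolding ASC_U_def sum_distrib_right sum_divide_distrib
  proof (intro sum.cong refl)
    fix i assume "i \<in> {..n}"
    hence i: "i \<le> n" by simp
    hence zn: "z ^ n = z ^ i * z ^ (n - i)" by (simp add: power_add[symmetric])
    have "A i * B (n - i)
        = (qbinom q n i / qpoch q q n) * (-1) ^ i * q ^ (i choose 2) * b ^ i * Pq q (n - i) u v * z ^ n"
      unfolding qbinom_divide_qpoch[OF q i] A_def B_def Pq_eq_qpoch[OF u] zn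
      by (simp add: power_mult_distrib)
    thus "A i * B (n - i) = qbinom q n i * (-1) ^ i * q ^ (i choose 2) * b ^ i * Pq q (n - i) u v * z ^ n / qpoch q q n"
      by simp
  qed
  ultimately show ?thesis by simp
qed

text \<open>\<open>D\<^sub>q\<close> maps \<open>z\<^sup>m / (q; q)\<^sub>m\<close> to \<open>z\<^sup>m\<^sup>-\<^sup>1 / (q; q)\<^sub>m\<^sub>-\<^sub>1\<close>, so it shifts the coefficients of a
  generating function by one.\<close>

lemma ASC_U_shifted_generating_function:
  fixes q u v b :: complex
  assumes q: "norm q < 1" "q \<noteq> 0" and u: "u \<noteq> 0" and "z \<noteq> 0" "norm (u * z) < 1"
  shows "(\<lambda>m. ASC_U (j + m) u v b q * z ^ m / qpoch q q m) sums
      ((Dq q ^^ j) (\<lambda>w. qpoch_inf (b * w) q * (qpoch_inf (v * w) q / qpoch_inf (u * w) q)) z)"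
  using assms(4,5)
proof (induction j arbitrary: z)
  case 0 then show ?case using ASC_U_generating_function[OF q(1) u] by simp
next
  case (Suc j)
  define H where "H = (Dq q ^^ j) (\<lambda>w. qpoch_inf (b * w) q * (qpoch_inf (v * w) q / qpoch_inf (u * w) q))"
  define f where "f m = (ASC_U (j + m) u v b q * z ^ m / qpoch q q m
                       - ASC_U (j + m) u v b q * (q * z) ^ m / qpoch q q m) / z" for m
  have "q * z \<noteq> 0" using Suc q by simp
  moreover have "norm (u * (q * z)) < 1"
    using norm_power_mult_le[OF q(1), of 1 "u * z"] Suc.prems by (simp add: mult_ac)
  ultimately have "f sums ((H z - H (q * z)) / z)"
    unfolding f_def H_def by (intro sums_divide sums_diff Suc.IH Suc.prems)
  hence "(\<lambda>m. f (Suc m)) sums ((H z - H (q * z)) / z)"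
    by (subst sums_Suc_iff) (simp add: f_def)
  moreover have "f (Suc m) = ASC_U (Suc j + m) u v b q * z ^ m / qpoch q q m" for m
  proof -
    have "qpoch q q (Suc m) \<noteq> 0" using qpoch_q_nonzero[OF q(1)] .
    moreover have "z ^ Suc m - (q * z) ^ Suc m = z * qpoch q q (Suc m) / qpoch q q m * z ^ m"
      using qpoch_q_nonzero[OF q(1), of m] by (simp add: qpoch_Suc power_mult_distrib field_simps)
    ultimately show ?thesis
      using Suc.prems(1) unfolding f_def diff_divide_distrib[symmetric] right_diff_distrib[symmetric]
      by (simp add: field_simps)
  qed
  ultimately show ?case unfolding Dq_funpow_Suc H_def by simp
qed

lemma ASC_U_shifted_generating_function_explicit:
  fixes q u v b z :: complex
  assumes q: "norm q < 1" "q \<noteq> 0" and u: "u \<noteq> 0" and z: "z \<noteq> 0" and uz: "norm (u * z) < 1"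
  shows "(\<lambda>m. ASC_U (j + m) u v b q * z ^ m / qpoch q q m) sums
     (\<Sum>k\<le>j. qbinom q j k * ((-b) ^ k * q ^ (k choose 2) * qpoch_inf (b * q ^ k * z) q) *
        (Pq q (j - k) u v * qpoch_inf (v * q ^ j * z) q / qpoch_inf (u * q ^ k * z) q))"
proof -
  have "(\<Sum>k\<le>j. qbinom q j k * ((Dq q ^^ k) (\<lambda>w. qpoch_inf (b * w) q) z *
           (Dq q ^^ (j - k)) (\<lambda>w. qpoch_inf (v * w) q / qpoch_inf (u * w) q) (q ^ k * z)))
     = (\<Sum>k\<le>j. qbinom q j k * ((-b) ^ k * q ^ (k choose 2) * qpoch_inf (b * q ^ k * z) q) *
        (Pq q (j - k) u v * qpoch_inf (v * q ^ j * z) q / qpoch_inf (u * q ^ k * z) q))"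
  proof (intro sum.cong refl)
    fix k assume "k \<in> {..j}"
    hence "q ^ j = q ^ (j - k) * q ^ k" by (simp add: power_add[symmetric])
    hence v_shift: "v * q ^ (j - k) * (q ^ k * z) = v * q ^ j * z" by (simp add: mult_ac)
    have nz: "q ^ k * z \<noteq> 0" using q z by simp
    have avoids: "\<forall>i. u * (q ^ k * z) * q ^ i \<noteq> 1"
    proof
      fix i
      have "norm (q ^ (i + k) * (u * z)) < 1"
        using norm_power_mult_le[OF q(1), of "i + k" "u * z"] uz by linarith
      thus "u * (q ^ k * z) * q ^ i \<noteq> 1" by (auto simp: power_add mult_ac)
    qed
    show "qbinom q j k * ((Dq q ^^ k) (\<lambda>w. qpoch_inf (b * w) q) z *
           (Dq q ^^ (j - k)) (\<lambda>w. qpoch_inf (v * w) q / qpoch_inf (u * w) q) (q ^ k * z))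
      = qbinom q j k * ((-b) ^ k * q ^ (k choose 2) * qpoch_inf (b * q ^ k * z) q) *
        (Pq q (j - k) u v * qpoch_inf (v * q ^ j * z) q / qpoch_inf (u * q ^ k * z) q)"
      unfolding Dq_funpow_qpoch_inf[OF q z] Dq_funpow_qpoch_inf_ratio[OF q nz avoids] v_shift
      by (simp add: mult.assoc)
  qed
  thus ?thesis
    using ASC_U_shifted_generating_function[OF q u z uz, of j v b]
    unfolding Dq_funpow_mult[OF q z, of j "\<lambda>w. qpoch_inf (b * w) q"] by simp
qed

subsection \<open>The terminating case \<open>y / x = q\<^sup>-\<^sup>r\<close>\<close>

lemma ASC_U_terminating:
  fixes q x y a :: complex
  assumes "q \<noteq> 0" "x \<noteq> 0" "y / x = inverse (q ^ r)"
  shows "ASC_U n x y a q = (\<Sum>j\<le>r. if j \<le> n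
           then qbinom q n (n - j) * (-1) ^ (n - j) * q ^ ((n - j) choose 2) * a ^ (n - j) * Pq q j x y else 0)"
proof -
  define g where "g j = qbinom q n (n - j) * (-1) ^ (n - j) * q ^ ((n - j) choose 2) * a ^ (n - j) * Pq q j x y" for j
  have "ASC_U n x y a q = (\<Sum>j\<le>n. g j)"
    unfolding ASC_U_def g_def
    by (rule sum.reindex_bij_witness[where i="\<lambda>k. n - k" and j="\<lambda>k. n - k"]) auto
  also have "\<dots> = (\<Sum>j\<in>{..r} \<inter> {..n}. g j)"
    using qpoch_inverse_power_eq_0[OF assms(1)]
    by (intro sum.mono_neutral_right) (auto simp: g_def Pq_eq_qpoch[OF assms(2)] assms(3) not_le)
  also have "\<dots> = (\<Sum>j\<le>r. if j \<le> n then g j else 0)"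
    by (subst sum.inter_restrict) auto
  finally show ?thesis unfolding g_def .
qed

lemma sum_triangle_reindex:
  fixes f :: "nat \<Rightarrow> nat \<Rightarrow> 'a::comm_monoid_add"
  shows "(\<Sum>j\<le>r. \<Sum>k\<le>j. f j k) = (\<Sum>n\<le>r. \<Sum>k\<le>r - n. f (n + k) k)"
proof -
  have "(\<Sum>j\<le>r. \<Sum>k\<le>j. f j k) = (\<Sum>(j, k)\<in>Sigma {..r} (\<lambda>j. {..j}). f j k)"
    by (rule sum.Sigma) auto
  also have "\<dots> = (\<Sum>(n, k)\<in>Sigma {..r} (\<lambda>n. {..r - n}). f (n + k) k)"
    by (rule sum.reindex_bij_witness[where j="\<lambda>(j, k). (j - k, k)" and i="\<lambda>(n, k). (n + k, k)"]) auto
  also have "\<dots> = (\<Sum>n\<le>r. \<Sum>k\<le>r - n. f (n + k) k)"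
    by (rule sum.Sigma[symmetric]) auto
  finally show ?thesis .
qed

locale terminating_product_formula =
  fixes q x y u v a b t :: complex and r :: nat
  assumes q: "0 < norm q" "norm q < 1"
    and y_over_x: "y / x = inverse (q ^ r)"
    and xbt_small: "norm (x * b * t * inverse (q ^ r)) < 1"
    and aut_small: "norm (a * u * t * inverse (q ^ r)) < 1"
    and nonzero: "x * b * t \<noteq> 0" "a * u * t \<noteq> 0" "a * b * t \<noteq> 0"
begin

lemma q_nonzero: "q \<noteq> 0"
  using q by auto

definition tail :: "nat \<Rightarrow> complex" where
  "tail n = qpoch_inf (a * b * t * inverse (q ^ n)) q * qpoch_inf (a * v * t) q
            / qpoch_inf (a * u * t * inverse (q ^ n)) q"

text \<open>\<open>lhs_term j k\<close> is the \<open>k\<close>-th \<open>q\<close>-Leibniz term of the \<open>j\<close>-th diagonal series of the left-hand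
  side, \<open>rhs_term n k\<close> the \<open>k\<close>-th Rothe term of the \<open>n\<close>-th term of the \<open>\<^sub>3\<phi>\<^sub>2\<close>.\<close>

definition lhs_term :: "nat \<Rightarrow> nat \<Rightarrow> complex" where
  "lhs_term j k = (-1) ^ j * inverse (q ^ (j choose 2)) * t ^ j * Pq q j x y / qpoch q q j
     * (qbinom q j k * (-b) ^ k * q ^ (k choose 2) * Pq q (j - k) u v) * tail (j - k)"

definition rhs_coeff :: "nat \<Rightarrow> complex" where
  "rhs_coeff n = qpoch (inverse (q ^ r)) q n * qpoch (v / u) q n
     * ((-1) ^ n * inverse (q ^ (n choose 2)) * (x * u * t) ^ n) / qpoch q q n"

definition rhs_term :: "nat \<Rightarrow> nat \<Rightarrow> complex" where
  "rhs_term n k = rhs_coeff n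
     * (qbinom q (r - n) k * (-1) ^ k * q ^ (k choose 2) * (x * b * t * inverse (q ^ r)) ^ k) * tail n"

lemma diagonal_summand_shift:
  "(-1) ^ (m + j) * inverse (q ^ ((m + j) choose 2))
      * (qbinom q (m + j) m * (-1) ^ m * q ^ (m choose 2) * a ^ m * Pq q j x y)
      * ASC_U (m + j) u v b q * t ^ (m + j) / qpoch q q (m + j)
    = (-1) ^ j * inverse (q ^ (j choose 2)) * t ^ j * Pq q j x y / qpoch q q j
      * (ASC_U (j + m) u v b q * (a * t * inverse (q ^ j)) ^ m / qpoch q q m)"
proof -
  have "qbinom q (m + j) m / qpoch q q (m + j) = 1 / (qpoch q q m * qpoch q q j)"
    using qbinom_divide_qpoch[OF q(2), of m "m + j"] by simp
  moreover have "qpoch q q m \<noteq> 0" "qpoch q q j \<noteq> 0" using qpoch_q_nonzero[OF q(2)] by auto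
  ultimately show ?thesis
    using q_nonzero unfolding choose_two_add
    by (simp add: power_add power_mult_distrib power_mult field_simps add.commute)
qed

text \<open>The part of the series coming from the \<open>j\<close>-th term of the terminating expansion of
  \<open>U\<^sub>n(x, y, a)\<close> is \<open>t\<^sup>j P\<^sub>j(x, y)\<close> times the shifted generating function of \<open>U\<^sub>n(u, v, b)\<close>
  at \<open>z = a t q\<^sup>-\<^sup>j\<close>.\<close>

lemma diagonal_sums:
  assumes "j \<le> r"
  shows "(\<lambda>n. (-1) ^ n * inverse (q ^ (n choose 2))
           * (if j \<le> n then qbinom q n (n - j) * (-1) ^ (n - j) * q ^ ((n - j) choose 2) * a ^ (n - j) * Pq q j x y else 0)
           * ASC_U n u v b q * t ^ n / qpoch q q n)
         sums (\<Sum>k\<le>j. lhs_term j k)"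
proof -
  define z where "z = a * t * inverse (q ^ j)"
  define K where "K = (-1) ^ j * inverse (q ^ (j choose 2)) * t ^ j * Pq q j x y / qpoch q q j"
  have qq: "norm q < 1" "q \<noteq> 0" using q q_nonzero by auto
  have "z \<noteq> 0" "u \<noteq> 0" using nonzero q_nonzero by (auto simp: z_def)
  moreover have "norm (u * z) < 1"
    using norm_mult_inverse_power_mono[OF qq assms, of "a * u * t"] aut_small by (simp add: z_def mult_ac)
  ultimately have "(\<lambda>m. K * (ASC_U (j + m) u v b q * z ^ m / qpoch q q m)) sums
     (K * (\<Sum>k\<le>j. qbinom q j k * ((-b) ^ k * q ^ (k choose 2) * qpoch_inf (b * q ^ k * z) q) *
        (Pq q (j - k) u v * qpoch_inf (v * q ^ j * z) q / qpoch_inf (u * q ^ k * z) q)))"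
    by (intro sums_mult ASC_U_shifted_generating_function_explicit qq)
  moreover have "K * (\<Sum>k\<le>j. qbinom q j k * ((-b) ^ k * q ^ (k choose 2) * qpoch_inf (b * q ^ k * z) q) *
        (Pq q (j - k) u v * qpoch_inf (v * q ^ j * z) q / qpoch_inf (u * q ^ k * z) q))
      = (\<Sum>k\<le>j. lhs_term j k)"
    unfolding sum_distrib_left
  proof (intro sum.cong refl)
    fix k assume "k \<in> {..j}"
    hence "q ^ j = q ^ k * q ^ (j - k)" by (simp add: power_add[symmetric])
    hence shift: "b * q ^ k * z = a * b * t * inverse (q ^ (j - k))" "v * q ^ j * z = a * v * t"
      "u * q ^ k * z = a * u * t * inverse (q ^ (j - k))"
      using q_nonzero by (simp_all add: z_def field_simps)
    show "K * (qbinom q j k * ((-b) ^ k * q ^ (k choose 2) * qpoch_inf (b * q ^ k * z) q) *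
        (Pq q (j - k) u v * qpoch_inf (v * q ^ j * z) q / qpoch_inf (u * q ^ k * z) q)) = lhs_term j k"
      unfolding shift by (simp add: lhs_term_def tail_def K_def mult_ac)
  qed
  moreover note diagonal_summand_shift[of _ j, folded K_def z_def]
  ultimately show ?thesis
    by (subst sums_zero_iff_shift[where n=j, symmetric]) simp_all
qed

lemma lhs_sums:
  "(\<lambda>n. (-1) ^ n * inverse (q ^ (n choose 2)) * ASC_U n x y a q * ASC_U n u v b q * t ^ n / qpoch q q n)
     sums (\<Sum>j\<le>r. \<Sum>k\<le>j. lhs_term j k)"
proof -
  have "x \<noteq> 0" using nonzero by auto
  hence "(-1) ^ n * inverse (q ^ (n choose 2)) * ASC_U n x y a q * ASC_U n u v b q * t ^ n / qpoch q q n
      = (\<Sum>j\<le>r. (-1) ^ n * inverse (q ^ (n choose 2))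
           * (if j \<le> n then qbinom q n (n - j) * (-1) ^ (n - j) * q ^ ((n - j) choose 2) * a ^ (n - j) * Pq q j x y else 0)
           * ASC_U n u v b q * t ^ n / qpoch q q n)" for n
    unfolding ASC_U_terminating[OF q_nonzero \<open>x \<noteq> 0\<close> y_over_x, of n a]
    by (simp add: sum_distrib_left sum_distrib_right sum_divide_distrib)
  thus ?thesis
    by (simp only:) (intro sums_sum diagonal_sums, simp)
qed

lemma reflection_factors:
  "q ^ n * ((-(x * b * t)) ^ n * inverse (q ^ (Suc n choose 2)))
     * ((-(a * u * t)) ^ n * inverse (q ^ (Suc n choose 2)))
     / ((-(a * b * t)) ^ n * inverse (q ^ (Suc n choose 2)))
   = (-1) ^ n * inverse (q ^ (n choose 2)) * (x * u * t) ^ n"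
proof -
  have "-(x * b * t) * -(a * u * t) / -(a * b * t) = (-1) * (x * u * t)"
    using nonzero by (simp add: field_simps)
  hence signs: "(-(x * b * t)) ^ n * (-(a * u * t)) ^ n / (-(a * b * t)) ^ n = (-1) ^ n * (x * u * t) ^ n"
    by (metis power_divide power_mult_distrib)
  have powers: "q ^ n * inverse (q ^ (Suc n choose 2)) = inverse (q ^ (n choose 2))"
    using q_nonzero by (simp add: choose_two_Suc power_add)
  have regroup: "Q * (A * I) * (B * I) / (C * I) = (A * B / C) * (Q * I)" if "I \<noteq> 0" for Q A B C I :: complex
    using that by (simp add: field_simps)
  have "inverse (q ^ (Suc n choose 2)) \<noteq> 0" using q_nonzero by simp
  show ?thesis
    unfolding regroup[OF \<open>inverse (q ^ (Suc n choose 2)) \<noteq> 0\<close>] signs powers by (simp add: mult_ac)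
qed

lemma qpoch_inf_ybt_split:
  assumes "n \<le> r"
  shows "qpoch_inf (y * b * t) q
       = qpoch (x * b * t * inverse (q ^ r)) q (r - n) * qpoch_inf (x * b * t * inverse (q ^ n)) q"
proof -
  have "q ^ r = q ^ (r - n) * q ^ n" using assms by (simp add: power_add[symmetric])
  hence "x * b * t * inverse (q ^ r) * q ^ (r - n) = x * b * t * inverse (q ^ n)"
    using q_nonzero by (simp add: field_simps)
  thus ?thesis
    using qpoch_inf_split[OF q(2), of "x * b * t * inverse (q ^ r)" "r - n"] y_over_x nonzero
    by (simp add: field_simps)
qed

lemma prefactor_times_qphi_term:
  assumes "n \<le> r"
  shows "(qpoch_inf (a * b * t) q * qpoch_inf (y * b * t) q * qpoch_inf (a * v * t) q)
           / (qpoch_inf (x * b * t) q * qpoch_inf (a * u * t) q)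
         * (qpochs [y / x, v / u, q / (a * b * t)] q n / qpochs [q, q / (x * b * t), q / (a * u * t)] q n * q ^ n)
       = rhs_coeff n * qpoch (x * b * t * inverse (q ^ r)) q (r - n) * tail n"
proof -
  have qq: "norm q < 1" "q \<noteq> 0" using q q_nonzero by auto
  define s where "s c = (-c) ^ n * inverse (q ^ (Suc n choose 2))" for c
  define P where "P = qpoch (inverse (q ^ r)) q n * qpoch (v / u) q n / qpoch q q n"
  define Fin where "Fin = qpoch (x * b * t * inverse (q ^ r)) q (r - n)"
  define A X U where "A = qpoch_inf (a * b * t * inverse (q ^ n)) q"
    and "X = qpoch_inf (x * b * t * inverse (q ^ n)) q" and "U = qpoch_inf (a * u * t * inverse (q ^ n)) q"
  define V where "V = qpoch_inf (a * v * t) q"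
  have reflect: "qpoch (q / c) q n * qpoch_inf c q = qpoch_inf (c * inverse (q ^ n)) q / s c" if "c \<noteq> 0" for c
    unfolding s_def by (rule qpoch_mult_qpoch_inf_reflect[OF qq that])
  have s_nz: "s c \<noteq> 0" if "c \<noteq> 0" for c using that q_nonzero by (simp add: s_def)
  have "X \<noteq> 0" "U \<noteq> 0"
    unfolding X_def U_def using xbt_small aut_small
    by (auto intro!: qpoch_inf_nonzero_norm_less[OF qq(1)]
        intro: le_less_trans[OF norm_mult_inverse_power_mono[OF qq assms]])
  have "(qpoch_inf (a * b * t) q * qpoch_inf (y * b * t) q * qpoch_inf (a * v * t) q)
           / (qpoch_inf (x * b * t) q * qpoch_inf (a * u * t) q)
         * (qpochs [y / x, v / u, q / (a * b * t)] q n / qpochs [q, q / (x * b * t), q / (a * u * t)] q n * q ^ n)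
      = P * q ^ n * (qpoch (q / (a * b * t)) q n * qpoch_inf (a * b * t) q) * qpoch_inf (y * b * t) q * V
        / ((qpoch (q / (x * b * t)) q n * qpoch_inf (x * b * t) q) * (qpoch (q / (a * u * t)) q n * qpoch_inf (a * u * t) q))"
    by (simp add: qpochs_def P_def V_def y_over_x mult_ac)
  also have "\<dots> = P * q ^ n * (A / s (a * b * t)) * (Fin * X) * V / ((X / s (x * b * t)) * (U / s (a * u * t)))"
    unfolding reflect[OF nonzero(1)] reflect[OF nonzero(2)] reflect[OF nonzero(3)] qpoch_inf_ybt_split[OF assms]
      A_def X_def U_def Fin_def ..
  also have "\<dots> = P * (q ^ n * s (x * b * t) * s (a * u * t) / s (a * b * t)) * Fin * (A * V / U)"
    using \<open>X \<noteq> 0\<close> \<open>U \<noteq> 0\<close> s_nz nonzero by (simp add: field_simps)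
  also have "\<dots> = rhs_coeff n * Fin * tail n"
    unfolding s_def reflection_factors by (simp add: rhs_coeff_def tail_def P_def A_def U_def V_def mult_ac)
  finally show ?thesis unfolding Fin_def .
qed

lemma prefactor_times_qphi:
  "(qpoch_inf (a * b * t) q * qpoch_inf (y * b * t) q * qpoch_inf (a * v * t) q)
     / (qpoch_inf (x * b * t) q * qpoch_inf (a * u * t) q)
   * qphi [y / x, v / u, q / (a * b * t)] [q / (x * b * t), q / (a * u * t)] q q
   = (\<Sum>n\<le>r. \<Sum>k\<le>r - n. rhs_term n k)"
proof -
  define T where "T n = qpochs [y / x, v / u, q / (a * b * t)] q n
    / qpochs [q, q / (x * b * t), q / (a * u * t)] q n * q ^ n" for n
  have "qphi [y / x, v / u, q / (a * b * t)] [q / (x * b * t), q / (a * u * t)] q q = (\<Sum>n. T n)"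
    by (simp add: qphi_def T_def)
  also have "\<dots> = (\<Sum>n\<le>r. T n)"
    using qpoch_inverse_power_eq_0[OF q_nonzero]
    by (intro suminf_finite) (auto simp: T_def qpochs_def y_over_x)
  finally show ?thesis
    using prefactor_times_qphi_term qpoch_rothe[OF q(2), of _ "r - _"]
    by (simp add: sum_distrib_left sum_distrib_right rhs_term_def T_def mult_ac)
qed

lemma lhs_term_eq_rhs_term:
  assumes "n + k \<le> r"
  shows "lhs_term (n + k) k = rhs_term n k"
proof -
  define s where "s = r - n"
  have ks: "k \<le> s" and rs: "r = n + s" using assms by (simp_all add: s_def)
  have qq: "norm q < 1" "q \<noteq> 0" using q q_nonzero by auto
  have x: "x \<noteq> 0" and u: "u \<noteq> 0" using nonzero by auto
  have qs: "inverse (q ^ r) * q ^ n = inverse (q ^ s)"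
    using q_nonzero unfolding rs by (simp add: power_add field_simps)
  have Pxy: "Pq q (n + k) x y = x ^ (n + k) * (qpoch (inverse (q ^ r)) q n * qpoch (inverse (q ^ s)) q k)"
    unfolding Pq_eq_qpoch[OF x] y_over_x qpoch_add qs ..
  have reverse: "qpoch (inverse (q ^ s)) q k
      = (-1) ^ k * q ^ (k choose 2) * inverse (q ^ s) ^ k * qpoch q q s / qpoch q q (s - k)"
    by (rule qpoch_inverse_power[OF qq ks])
  have binom1: "qbinom q (n + k) k = qpoch q q (n + k) / (qpoch q q k * qpoch q q n)"
    unfolding qbinom_def by simp
  have binom2: "qbinom q (r - n) k = qpoch q q s / (qpoch q q k * qpoch q q (s - k))"
    unfolding qbinom_def s_def ..
  have pow1: "inverse (q ^ ((n + k) choose 2))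
      = inverse (q ^ (n choose 2)) * inverse (q ^ (k choose 2)) * inverse (q ^ (n * k))"
    unfolding choose_two_add by (simp add: power_add)
  have pow2: "inverse (q ^ s) ^ k = inverse (q ^ r) ^ k * q ^ (n * k)"
    unfolding qs[symmetric] by (simp add: power_mult_distrib power_mult)
  have "qpoch q q k \<noteq> 0" "qpoch q q n \<noteq> 0" "qpoch q q (s - k) \<noteq> 0" "qpoch q q (n + k) \<noteq> 0"
    using qpoch_q_nonzero[OF qq(1)] by auto
  then show ?thesis
    using q_nonzero unfolding lhs_term_def rhs_term_def rhs_coeff_def add_diff_cancel_right'
    unfolding Pxy reverse binom1 binom2 pow1 pow2 Pq_eq_qpoch[OF u]
    by (simp add: field_simps power_add power_mult_distrib power_minus[of b])
qed

theorem product_formula: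
  "(\<lambda>n. (-1) ^ n * inverse (q ^ (n choose 2)) * ASC_U n x y a q * ASC_U n u v b q * t ^ n / qpoch q q n)
   sums ((qpoch_inf (a * b * t) q * qpoch_inf (y * b * t) q * qpoch_inf (a * v * t) q)
         / (qpoch_inf (x * b * t) q * qpoch_inf (a * u * t) q)
         * qphi [y / x, v / u, q / (a * b * t)] [q / (x * b * t), q / (a * u * t)] q q)"
proof -
  have "(\<Sum>j\<le>r. \<Sum>k\<le>j. lhs_term j k) = (\<Sum>n\<le>r. \<Sum>k\<le>r - n. rhs_term n k)"
    unfolding sum_triangle_reindex by (intro sum.cong refl) (auto intro!: lhs_term_eq_rhs_term)
  with lhs_sums show ?thesis
    unfolding prefactor_times_qphi by simp
qed

end

theorem mainTheorem7:
  fixes q x y u v a b t :: complex and r :: nat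
  assumes q: "0 < norm q" "norm q < 1"
    and trm: "y / x = inverse (q ^ r) \<or> v / u = inverse (q ^ r)"
    and bnd: "max (norm (x * b * t * inverse (q ^ r))) (norm (a * u * t * inverse (q ^ r))) < 1"
    and nz: "x * b * t \<noteq> 0" "a * u * t \<noteq> 0" "a * b * t \<noteq> 0"
  shows "(\<lambda>n. (-1) ^ n * inverse (q ^ (n choose 2)) * ASC_U n x y a q * ASC_U n u v b q
            * t ^ n / qpoch q q n)
         sums (
               (qpoch_inf (a * b * t) q * qpoch_inf (y * b * t) q * qpoch_inf (a * v * t) q)
               / (qpoch_inf (x * b * t) q * qpoch_inf (a * u * t) q)
               * qphi [y / x, v / u, q / (a * b * t)] [q / (x * b * t), q / (a * u * t)] q q)"
  using trm
proof
  assume "y / x = inverse (q ^ r)"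
  then interpret terminating_product_formula q x y u v a b t r
    using q bnd nz by unfold_locales auto
  show ?thesis by (rule product_formula)
next
  assume "v / u = inverse (q ^ r)"
  then interpret terminating_product_formula q u v x y b a t r
    using q bnd nz by unfold_locales (auto simp: mult_ac)
  from product_formula show ?thesis
    by (simp add: qphi_def qpochs_def mult_ac)
qed

end
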